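(* No judgment aggregation rule that satisfies the equity property satisfies participation, and no judgment aggregation rule that satisfies the equity property satisfies antipodal strategyproofness (for Hamming-distance preferences extended to sets of judgments by any extension satisfying (R1) and (R2)).
   Context: An agenda is a finite nonempty list $\Phi=(\phi_1,\dots,\phi_m)$ of propositional formulas; a judgment is $J\in\{0,1\}^m$, $J(\phi_k)$ its $k$-th entry; the antipodal judgment $\overline{J}$ accepts exactly the issues rejected by $J$. $\mathcal{J}(\Phi)\subseteq\{0,1\}^m$ is the nonempty set of admissible judgments; the agenda may be chosen so that $\mathcal{J}(\Phi)$ is any prescribed nonempty set of vectors. For a finite set of agents $N$, a profile is $\mathbf{P}=(J_1,\dots,J_n)\in\mathcal{J}(\Phi)^n$; $\mathbf{P}_{-i}$ removes agent $i$, $(\mathbf{P}_{-i},J)$ replaces $i$'s judgment by $J$. A rule $F$ maps every profile (every finite group, every agenda) to a nonempty $F(\mathbf{P})\subseteq\mathcal{J}(\Phi)$. Hamming distance $H(J,J')=\sum_k|J(\phi_k)-J'(\phi_k)|$. Agent $i$ with truthful $J_i$: $J\succeq_i J'$ iff $H(J_i,J)\le H(J_i,J')$. Set preferences $\mathrel{\mathring{\succeq}}_i$ (strict part $\mathrel{\mathring{\succ}}_i$) satisfy (R1) $J\succeq_i J'$ iff $\{J\}\mathrel{\mathring{\succeq}}_i\{J'\}$, and (R2) $X\mathrel{\mathring{\succ}}_i Y$ implies there exist $J\in X$, $J'\in Y$ with $J\succ_i J'$ and $\{J,J'\}\not\subseteq X\cap Y$. Equity property: for all $\mathbf{P}$ and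 $J\in F(\mathbf{P})$ there are no $J'\in\mathcal{J}(\Phi)$, $i',j'\in N$ with $|H(J_i,J')-H(J_j,J')|<|H(J_{i'},J)-H(J_{j'},J)|$ for all $i,j\in N$. Participation: no $\mathbf{P}$, $i$ with $F(\mathbf{P}_{-i})\mathrel{\mathring{\succ}}_i F(\mathbf{P})$. Antipodal strategyproofness: no $\mathbf{P}$, $i$ with $F(\mathbf{P}_{-i},\overline{J_i})\mathrel{\mathring{\succ}}_i F(\mathbf{P})$. *)

theory Defs
  imports Main
begin

text \<open>Judgments are boolean lists of length m (entry k = acceptance of issue k).
  An agenda is represented by its (nonempty) set of admissible judgments,
  all of the same length m \<ge> 1; any such set is realisable by some agenda.\<close>

type_synonym jdg = "bool list"
type_synonym profile = "nat \<rightharpoonup> jdg"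

definition hamming :: "jdg \<Rightarrow> jdg \<Rightarrow> nat" where
  "hamming J J' = card {k. k < length J \<and> J ! k \<noteq> J' ! k}"

definition antipodal :: "jdg \<Rightarrow> jdg" where
  "antipodal J = map Not J"

definition valid_agenda :: "jdg set \<Rightarrow> bool" where
  "valid_agenda A \<longleftrightarrow> A \<noteq> {} \<and> (\<exists>m>0. \<forall>J\<in>A. length J = m)"

definition valid_profile :: "jdg set \<Rightarrow> profile \<Rightarrow> bool" where
  "valid_profile A P \<longleftrightarrow> finite (dom P) \<and> dom P \<noteq> {} \<and> ran P \<subseteq> A"

definition is_rule :: "(jdg set \<Rightarrow> profile \<Rightarrow> jdg set) \<Rightarrow> bool" where
  "is_rule F \<longleftrightarrow> (\<forall>A P. valid_agenda A \<and> valid_profile A P \<longrightarrow> F A P \<noteq> {} \<and> F A P \<subseteq> A)"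

definition equity :: "(jdg set \<Rightarrow> profile \<Rightarrow> jdg set) \<Rightarrow> bool" where
  "equity F \<longleftrightarrow> (\<forall>A P. valid_agenda A \<and> valid_profile A P \<longrightarrow>
     (\<forall>J\<in>F A P. \<not> (\<exists>J'\<in>A. \<exists>i'\<in>dom P. \<exists>j'\<in>dom P. \<forall>i\<in>dom P. \<forall>j\<in>dom P.
        \<bar>int (hamming (the (P i)) J') - int (hamming (the (P j)) J')\<bar>
        < \<bar>int (hamming (the (P i')) J) - int (hamming (the (P j')) J)\<bar>)))"

text \<open>Set extension: ext A Ji X Y means X is weakly preferred to Y by an agent with
  truthful jdg Ji (on agenda with admissible set A).\<close>
type_synonym set_ext = "jdg set \<Rightarrow> jdg \<Rightarrow> jdg set \<Rightarrow> jdg set \<Rightarrow> bool"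

definition ext_strict :: "set_ext \<Rightarrow> jdg set \<Rightarrow> jdg \<Rightarrow> jdg set \<Rightarrow> jdg set \<Rightarrow> bool" where
  "ext_strict E A Ji X Y \<longleftrightarrow> E A Ji X Y \<and> \<not> E A Ji Y X"

definition R1 :: "set_ext \<Rightarrow> bool" where
  "R1 E \<longleftrightarrow> (\<forall>A Ji J J'. valid_agenda A \<and> Ji \<in> A \<and> J \<in> A \<and> J' \<in> A \<longrightarrow>
     (hamming Ji J \<le> hamming Ji J' \<longleftrightarrow> E A Ji {J} {J'}))"

definition R2 :: "set_ext \<Rightarrow> bool" where
  "R2 E \<longleftrightarrow> (\<forall>A Ji X Y. valid_agenda A \<and> Ji \<in> A \<and> X \<subseteq> A \<and> Y \<subseteq> A \<and> ext_strict E A Ji X Y \<longrightarrow>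
     (\<exists>J\<in>X. \<exists>J'\<in>Y. hamming Ji J < hamming Ji J' \<and> \<not> {J, J'} \<subseteq> X \<inter> Y))"

definition participation :: "(jdg set \<Rightarrow> profile \<Rightarrow> jdg set) \<Rightarrow> set_ext \<Rightarrow> bool" where
  "participation F E \<longleftrightarrow> (\<forall>A P i. valid_agenda A \<and> valid_profile A P \<and> i \<in> dom P
      \<and> valid_profile A (P(i := None)) \<longrightarrow>
      \<not> ext_strict E A (the (P i)) (F A (P(i := None))) (F A P))"

definition antipodal_sp :: "(jdg set \<Rightarrow> profile \<Rightarrow> jdg set) \<Rightarrow> set_ext \<Rightarrow> bool" where
  "antipodal_sp F E \<longleftrightarrow> (\<forall>A P i. valid_agenda A \<and> valid_profile A P \<and> i \<in> dom P
      \<and> antipodal (the (P i)) \<in> A \<longrightarrow>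
      \<not> ext_strict E A (the (P i)) (F A (P(i \<mapsto> antipodal (the (P i))))) (F A P))"

end

theory Submission
  imports Defs
begin

text \<open>Two small agendas suffice. In each, the equity property pins down the
  outcome as a single judgment: for the chosen profile one admissible judgment
  has strictly smaller maximal distance spread among the agents than every other
  one. With four issues and admissible set \<open>{0000, 0001, 0110, 1010}\<close>, the
  profile \<open>(0000, 0001, 0110, 1010)\<close> forces \<open>0000\<close>, while without the agent
  holding \<open>0110\<close> the outcome is \<open>0110\<close>, so that agent gains by abstaining.
  With admissible set \<open>{0000, 0001, 0110, 1011, 1110}\<close>, the profile
  \<open>(0001, 1011, 1011)\<close> forces \<open>0110\<close>, at distance 3 from the first agent,
  whereas reporting the antipode \<open>1110\<close> instead forces \<open>0000\<close>, at distance 1.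
  Both outcomes being singletons, (R1) alone makes the manipulation strict.\<close>

lemma hamming_Nil [simp]: "hamming [] J = 0"
  by (simp add: hamming_def)

lemma hamming_Cons [simp]:
  "hamming (a # J) (b # J') = (if a \<noteq> b then 1 else 0) + hamming J J'"
proof -
  define M where "M = {k. (a # J) ! k \<noteq> (b # J') ! k}"
  have cons: "hamming (a # J) (b # J') = card {k \<in> M. k < Suc (length J)}"
    unfolding hamming_def M_def by (simp add: conj_commute)
  have tail: "hamming J J' = card {k. Suc k \<in> M \<and> k < length J}"
    unfolding hamming_def M_def by (simp add: conj_commute)
  show ?thesis
    using cons tail card_less_Suc[of M "length J"] card_less_Suc2[of M "length J"]
    by (cases "a = b") (simp_all add: M_def)
qed

lemma equity_forces_singleton:
  assumes "is_rule F" "equity F" "valid_agenda A" "valid_profile A P" "J0 \<in> A"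
    and "\<forall>J\<in>A. J \<noteq> J0 \<longrightarrow> (\<exists>i'\<in>dom P. \<exists>j'\<in>dom P. \<forall>i\<in>dom P. \<forall>j\<in>dom P.
        \<bar>int (hamming (the (P i)) J0) - int (hamming (the (P j)) J0)\<bar>
        < \<bar>int (hamming (the (P i')) J) - int (hamming (the (P j')) J)\<bar>)"
  shows "F A P = {J0}"
proof -
  have nonempty: "F A P \<noteq> {}" and admissible: "F A P \<subseteq> A"
    using assms(1,3,4) unfolding is_rule_def by blast+
  have "J = J0" if "J \<in> F A P" for J
  proof (rule ccontr)
    assume "J \<noteq> J0"
    with that admissible assms(6) have "\<exists>i'\<in>dom P. \<exists>j'\<in>dom P. \<forall>i\<in>dom P. \<forall>j\<in>dom P.
        \<bar>int (hamming (the (P i)) J0) - int (hamming (the (P j)) J0)\<bar>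
        < \<bar>int (hamming (the (P i')) J) - int (hamming (the (P j')) J)\<bar>"
      by blast
    with assms(5) have "\<exists>J'\<in>A. \<exists>i'\<in>dom P. \<exists>j'\<in>dom P. \<forall>i\<in>dom P. \<forall>j\<in>dom P.
        \<bar>int (hamming (the (P i)) J') - int (hamming (the (P j)) J')\<bar>
        < \<bar>int (hamming (the (P i')) J) - int (hamming (the (P j')) J)\<bar>"
      by (rule bexI[rotated])
    moreover from assms(2-4) that have "\<not> (\<exists>J'\<in>A. \<exists>i'\<in>dom P. \<exists>j'\<in>dom P. \<forall>i\<in>dom P. \<forall>j\<in>dom P.
        \<bar>int (hamming (the (P i)) J') - int (hamming (the (P j)) J')\<bar>
        < \<bar>int (hamming (the (P i')) J) - int (hamming (the (P j')) J)\<bar>)"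
      unfolding equity_def by blast
    ultimately show False by contradiction
  qed
  with nonempty show ?thesis by blast
qed

lemma R1_strict_singleton:
  assumes "R1 E" "valid_agenda A" "Ji \<in> A" "J \<in> A" "J' \<in> A"
    and "hamming Ji J < hamming Ji J'"
  shows "ext_strict E A Ji {J} {J'}"
proof -
  have "hamming Ji J \<le> hamming Ji J' \<longleftrightarrow> E A Ji {J} {J'}"
    and "hamming Ji J' \<le> hamming Ji J \<longleftrightarrow> E A Ji {J'} {J}"
    using assms(1-5) unfolding R1_def by blast+
  then have "E A Ji {J} {J'}" and "\<not> E A Ji {J'} {J}"
    using assms(6) by auto
  then show ?thesis unfolding ext_strict_def ..
qed

abbreviation "j0000 \<equiv> [False, False, False, False]"
abbreviation "j0001 \<equiv> [False, False, False, True]"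
abbreviation "j0110 \<equiv> [False, True, True, False]"
abbreviation "j1010 \<equiv> [True, False, True, False]"
abbreviation "j1011 \<equiv> [True, False, True, True]"
abbreviation "j1110 \<equiv> [True, True, True, False]"

lemma equity_not_participation:
  assumes "is_rule F" "equity F" "R1 E"
  shows "\<not> participation F E"
proof -
  define A where "A = {j0000, j0001, j0110, j1010}"
  define P :: profile where "P = [0 \<mapsto> j0000, 1 \<mapsto> j0001, 2 \<mapsto> j0110, 3 \<mapsto> j1010]"
  have dom_P: "dom P = {0, 1, 2, 3}" by (auto simp: P_def)
  have dom_abstain: "dom (P(2 := None)) = {0, 1, 3}" by (auto simp: P_def)
  have agenda: "valid_agenda A" unfolding valid_agenda_def A_def by auto
  have profile: "valid_profile A P"
    unfolding valid_profile_def dom_P by (auto simp: A_def P_def ran_def)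
  have abstain: "valid_profile A (P(2 := None))"
    unfolding valid_profile_def dom_abstain by (auto simp: A_def P_def ran_def)
  have "F A P = {j0000}"
    by (rule equity_forces_singleton[OF assms(1,2) agenda profile])
      (simp_all add: A_def dom_P P_def)
  moreover have "F A (P(2 := None)) = {j0110}"
    by (rule equity_forces_singleton[OF assms(1,2) agenda abstain])
      (simp_all add: A_def dom_abstain P_def)
  ultimately have "ext_strict E A (the (P 2)) (F A (P(2 := None))) (F A P)"
    using R1_strict_singleton[OF assms(3) agenda] by (simp add: A_def P_def)
  then show ?thesis
    unfolding participation_def using agenda profile abstain dom_P by blast
qed

lemma equity_not_antipodal_sp:
  assumes "is_rule F" "equity F" "R1 E"
  shows "\<not> antipodal_sp F E"
proof -
  define A where "A = {j0000, j0001, j0110, j1011, j1110}"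
  define P :: profile where "P = [0 \<mapsto> j0001, 1 \<mapsto> j1011, 2 \<mapsto> j1011]"
  have antipode: "antipodal (the (P 0)) = j1110" by (simp add: P_def antipodal_def)
  have dom_P: "dom P = {0, 1, 2}" by (auto simp: P_def)
  have dom_flip: "dom (P(0 \<mapsto> j1110)) = {0, 1, 2}" by (auto simp: P_def)
  have agenda: "valid_agenda A" unfolding valid_agenda_def A_def by auto
  have profile: "valid_profile A P"
    unfolding valid_profile_def dom_P by (auto simp: A_def P_def ran_def)
  have flip: "valid_profile A (P(0 \<mapsto> j1110))"
    unfolding valid_profile_def dom_flip by (auto simp: A_def P_def ran_def)
  have outcome: "F A P = {j0110}"
    by (rule equity_forces_singleton[OF assms(1,2) agenda profile])
      (simp_all add: A_def dom_P P_def)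
  have outcome_flip: "F A (P(0 \<mapsto> j1110)) = {j0000}"
    by (rule equity_forces_singleton[OF assms(1,2) agenda flip])
      (simp_all add: A_def dom_flip P_def)
  have "ext_strict E A (the (P 0)) (F A (P(0 \<mapsto> antipodal (the (P 0))))) (F A P)"
    unfolding antipode outcome outcome_flip
    by (rule R1_strict_singleton[OF assms(3) agenda]) (simp_all add: A_def P_def)
  moreover have "antipodal (the (P 0)) \<in> A" by (simp add: antipode A_def)
  ultimately show ?thesis
    unfolding antipodal_sp_def using agenda profile dom_P by blast
qed

theorem mainTheorem9:
  fixes F :: "jdg set \<Rightarrow> profile \<Rightarrow> jdg set" and E :: set_ext
  assumes "is_rule F" and "equity F" and "R1 E" and "R2 E"
  shows "\<not> participation F E \<and> \<not> antipodal_sp F E"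
  using equity_not_participation[OF assms(1-3)] equity_not_antipodal_sp[OF assms(1-3)]
  by blast

end
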